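(* Let $\mathcal H$ be a real Hilbert space, let $f:\mathcal H\to\mathbb R$ be convex and twice continuously differentiable with $\operatorname{argmin}_{\mathcal H} f\neq\emptyset$, let $t_0>0$, $\beta\ge 0$ and $\alpha=3$. Let $u:[t_0,+\infty[\to\mathcal H$ be a classical solution of $$\dddot u(t)+\frac{10}{t}\ddot u(t)+\frac{20}{t^2}\dot u(t)+\beta\,\nabla^2 f\Big(u(t)+\tfrac14 t\dot u(t)\Big)\Big(\tfrac54\dot u(t)+\tfrac14 t\ddot u(t)\Big)+\nabla f\Big(u(t)+\tfrac14 t\dot u(t)\Big)=0 .$$ Then there exists $C>0$ such that $f\big(u(t)+\tfrac14 t\dot u(t)\big)-\inf_{\mathcal H}f\le C/t^3$ for all sufficiently large $t$.
   Context: $\nabla^2 f$ is the Hessian of $f$; $\dot u,\ddot u,\dddot u$ are time derivatives of $u$. *)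

theory Defs
  imports "HOL-Analysis.Analysis"
begin

end

theory Submission
  imports Defs
begin

text \<open>Put \<open>x = u + (t/4) \<dot>u\<close> and fix a minimiser \<open>z\<close> of \<open>f\<close>. Multiplied by \<open>t\<^sup>2/4\<close>,
  the equation says exactly that
  \<open>v = 3 (x - z) + t \<dot>x + (\<beta> t\<^sup>2/4) \<nabla>f(x)\<close> satisfies \<open>\<dot>v = (\<beta> t/2 - t\<^sup>2/4) \<nabla>f(x)\<close>.
  For the energy \<open>E = (t\<^sup>3/4 - \<beta> t\<^sup>2/2) (f(x) - f(z)) + |v|\<^sup>2/2\<close> the terms in
  \<open>\<langle>\<nabla>f(x), \<dot>x\<rangle>\<close> cancel, and the gradient inequality of convexity
  \<open>f(x) - f(z) \<le> \<langle>\<nabla>f(x), x - z\<rangle>\<close> leaves \<open>\<dot>E \<le> (4\<beta>/t\<^sup>2) E\<close> for large \<open>t\<close>.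
  Hence \<open>exp(4\<beta>/t) E\<close> is nonincreasing, so \<open>E\<close> is bounded and
  \<open>f(x) - f(z) = O(1/t\<^sup>3)\<close> by the leading coefficient \<open>t\<^sup>3/4\<close>.\<close>

lemma convex_on_gradient_inequality:
  fixes f :: "'a::real_inner \<Rightarrow> real"
  assumes conv: "convex_on UNIV f"
    and deriv: "(f has_derivative (\<lambda>h. g \<bullet> h)) (at x)"
  shows "f x + g \<bullet> (y - x) \<le> f y"
proof -
  define \<phi> where "\<phi> s = f (x + s *\<^sub>R (y - x))" for s :: real
  have convex_\<phi>: "convex_on UNIV \<phi>"
  proof (rule convex_onI)
    fix t a b :: real assume t: "0 < t" "t < 1"
    have "x + ((1 - t) *\<^sub>R a + t *\<^sub>R b) *\<^sub>R (y - x)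
        = (1 - t) *\<^sub>R (x + a *\<^sub>R (y - x)) + t *\<^sub>R (x + b *\<^sub>R (y - x))"
      by (simp add: algebra_simps)
    then show "\<phi> ((1 - t) *\<^sub>R a + t *\<^sub>R b) \<le> (1 - t) * \<phi> a + t * \<phi> b"
      unfolding \<phi>_def using convex_onD[OF conv, of t] t by simp
  qed simp
  have line: "((\<lambda>s. x + s *\<^sub>R (y - x)) has_derivative (\<lambda>h. h *\<^sub>R (y - x))) (at 0)"
    by (auto intro!: derivative_eq_intros)
  have "(f has_derivative (\<lambda>h. g \<bullet> h)) (at ((\<lambda>s. x + s *\<^sub>R (y - x)) 0))"
    using deriv by simp
  from diff_chain_at[OF line this]
  have "(\<phi> has_derivative (\<lambda>h. g \<bullet> (h *\<^sub>R (y - x)))) (at 0)"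
    unfolding \<phi>_def o_def by simp
  then have "(\<phi> has_field_derivative (g \<bullet> (y - x))) (at 0)"
    unfolding has_field_derivative_def by (rule has_derivative_eq_rhs) (auto simp: fun_eq_iff)
  then have "\<phi> 1 - \<phi> 0 \<ge> (g \<bullet> (y - x)) * (1 - 0)"
    by (intro convex_on_imp_above_tangent[OF convex_\<phi>]) auto
  then show ?thesis unfolding \<phi>_def by simp
qed

lemma exp_inverse_mult_nonincreasing:
  fixes E E' :: "real \<Rightarrow> real"
  assumes "0 < T" "T \<le> t"
    and deriv: "\<And>s. T \<le> s \<Longrightarrow> (E has_real_derivative E' s) (at s)"
    and deriv_le: "\<And>s. T \<le> s \<Longrightarrow> E' s \<le> c / s\<^sup>2 * E s"
  shows "exp (c / t) * E t \<le> exp (c / T) * E T"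
proof -
  have "\<exists>G'. ((\<lambda>s. exp (c / s) * E s) has_real_derivative G') (at s) \<and> G' \<le> 0"
    if s: "T \<le> s" for s
  proof (intro exI conjI)
    have "s > 0" using s \<open>0 < T\<close> by simp
    then have "((\<lambda>s. c / s) has_real_derivative - (c / s\<^sup>2)) (at s)"
      by (auto intro!: derivative_eq_intros simp: power2_eq_square)
    from DERIV_mult[OF DERIV_fun_exp[OF this] deriv[OF s]]
    show "((\<lambda>s. exp (c / s) * E s) has_real_derivative exp (c / s) * (E' s - c / s\<^sup>2 * E s)) (at s)"
      by (simp add: algebra_simps)
    show "exp (c / s) * (E' s - c / s\<^sup>2 * E s) \<le> 0"
      using deriv_le[OF s] by (simp add: mult_nonneg_nonpos)
  qed
  then show ?thesis
    using DERIV_nonpos_imp_nonincreasing[of T t "\<lambda>s. exp (c / s) * E s"] \<open>T \<le> t\<close> by auto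
qed

locale third_order_inertial_system =
  fixes f :: "'a::real_inner \<Rightarrow> real"
    and grad :: "'a \<Rightarrow> 'a"
    and hess :: "'a \<Rightarrow> 'a \<Rightarrow>\<^sub>L 'a"
    and u u1 u2 u3 :: "real \<Rightarrow> 'a"
    and t0 \<beta> :: real
    and z :: 'a
  assumes convex: "convex_on UNIV f"
    and grad: "\<And>x. (f has_derivative (\<lambda>h. grad x \<bullet> h)) (at x)"
    and hess: "\<And>x. (grad has_derivative blinfun_apply (hess x)) (at x)"
    and minimizer: "\<And>y. f z \<le> f y"
    and t0_pos: "t0 > 0"
    and beta_nonneg: "\<beta> \<ge> 0"
    and d1: "\<And>t. t \<ge> t0 \<Longrightarrow> (u has_vector_derivative u1 t) (at t within {t0..})"
    and d2: "\<And>t. t \<ge> t0 \<Longrightarrow> (u1 has_vector_derivative u2 t) (at t within {t0..})"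
    and d3: "\<And>t. t \<ge> t0 \<Longrightarrow> (u2 has_vector_derivative u3 t) (at t within {t0..})"
    and ode: "\<And>t. t \<ge> t0 \<Longrightarrow>
      u3 t + (10 / t) *\<^sub>R u2 t + (20 / t\<^sup>2) *\<^sub>R u1 t
      + \<beta> *\<^sub>R blinfun_apply (hess (u t + (t / 4) *\<^sub>R u1 t)) ((5 / 4) *\<^sub>R u1 t + (t / 4) *\<^sub>R u2 t)
      + grad (u t + (t / 4) *\<^sub>R u1 t) = 0"
begin

definition x :: "real \<Rightarrow> 'a" where
  "x t = u t + (t / 4) *\<^sub>R u1 t"

definition xd :: "real \<Rightarrow> 'a" where
  "xd t = (5 / 4) *\<^sub>R u1 t + (t / 4) *\<^sub>R u2 t"

definition v :: "real \<Rightarrow> 'a" where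
  "v t = 3 *\<^sub>R (x t - z) + t *\<^sub>R xd t + (\<beta> * t\<^sup>2 / 4) *\<^sub>R grad (x t)"

definition energy_coeff :: "real \<Rightarrow> real" where
  "energy_coeff t = t ^ 3 / 4 - \<beta> * t\<^sup>2 / 2"

definition energy :: "real \<Rightarrow> real" where
  "energy t = energy_coeff t * (f (x t) - f z) + v t \<bullet> v t / 2"

definition energy_deriv :: "real \<Rightarrow> real" where
  "energy_deriv t = (3 * t\<^sup>2 / 4 - \<beta> * t) * (f (x t) - f z) + energy_coeff t * (grad (x t) \<bullet> xd t)
     + (\<beta> * t / 2 - t\<^sup>2 / 4) * (v t \<bullet> grad (x t))"

lemma u_derivatives_at:
  assumes "t > t0"
  shows "(u has_vector_derivative u1 t) (at t)"
    and "(u1 has_vector_derivative u2 t) (at t)"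
    and "(u2 has_vector_derivative u3 t) (at t)"
  using d1[of t] d2[of t] d3[of t] assms at_within_interior[of t "{t0..}"] by simp_all

lemma x_has_vector_derivative:
  assumes "t > t0"
  shows "(x has_vector_derivative xd t) (at t)"
  unfolding x_def[abs_def]
  by (rule derivative_eq_intros u_derivatives_at assms refl | simp)+
    (use scaleR_add_left[of 1 "1 / 4" "u1 t"] in \<open>simp add: xd_def algebra_simps\<close>)

lemma xd_has_vector_derivative:
  assumes "t > t0"
  shows "(xd has_vector_derivative (3 / 2) *\<^sub>R u2 t + (t / 4) *\<^sub>R u3 t) (at t)"
  unfolding xd_def[abs_def]
  by (rule derivative_eq_intros u_derivatives_at assms refl | simp)+
    (use scaleR_add_left[of "1 / 4" "5 / 4" "u2 t"] in \<open>simp add: algebra_simps\<close>)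

lemma f_x_has_real_derivative:
  assumes "t > t0"
  shows "((\<lambda>s. f (x s)) has_real_derivative grad (x t) \<bullet> xd t) (at t)"
proof -
  from diff_chain_at[OF x_has_vector_derivative[OF assms, unfolded has_vector_derivative_def] grad]
  have "((\<lambda>s. f (x s)) has_derivative (\<lambda>h. grad (x t) \<bullet> (h *\<^sub>R xd t))) (at t)"
    by (simp add: o_def)
  then show ?thesis
    unfolding has_field_derivative_def by (rule has_derivative_eq_rhs) (auto simp: fun_eq_iff)
qed

lemma grad_x_has_vector_derivative:
  assumes "t > t0"
  shows "((\<lambda>s. grad (x s)) has_vector_derivative hess (x t) (xd t)) (at t)"
proof -
  from diff_chain_at[OF x_has_vector_derivative[OF assms, unfolded has_vector_derivative_def] hess]
  have "((\<lambda>s. grad (x s)) has_derivative (\<lambda>h. hess (x t) (h *\<^sub>R xd t))) (at t)"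
    by (simp add: o_def)
  then show ?thesis
    unfolding has_vector_derivative_def
    by (rule has_derivative_eq_rhs) (auto simp: fun_eq_iff blinfun.scaleR_right)
qed

lemma v_has_vector_derivative:
  assumes "t > t0"
  shows "(v has_vector_derivative (\<beta> * t / 2 - t\<^sup>2 / 4) *\<^sub>R grad (x t)) (at t)"
proof -
  have "t > 0" using assms t0_pos by simp
  have "(t\<^sup>2 / 4) *\<^sub>R (u3 t + (10 / t) *\<^sub>R u2 t + (20 / t\<^sup>2) *\<^sub>R u1 t
      + \<beta> *\<^sub>R hess (x t) (xd t) + grad (x t)) = 0"
    using ode[of t] assms unfolding x_def xd_def by simp
  then have ode_scaled: "(t\<^sup>2 / 4) *\<^sub>R u3 t + (5 * t / 2) *\<^sub>R u2 t + 5 *\<^sub>R u1 t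
      + (\<beta> * t\<^sup>2 / 4) *\<^sub>R hess (x t) (xd t) + (t\<^sup>2 / 4) *\<^sub>R grad (x t) = 0"
    using \<open>t > 0\<close> by (simp add: algebra_simps power2_eq_square)
  have "(v has_vector_derivative 4 *\<^sub>R xd t + t *\<^sub>R ((3 / 2) *\<^sub>R u2 t + (t / 4) *\<^sub>R u3 t)
      + (\<beta> * t / 2) *\<^sub>R grad (x t) + (\<beta> * t\<^sup>2 / 4) *\<^sub>R hess (x t) (xd t)) (at t)"
    unfolding v_def[abs_def]
    by (rule derivative_eq_intros x_has_vector_derivative xd_has_vector_derivative
        grad_x_has_vector_derivative assms refl | simp)+
      (use scaleR_add_left[of 1 3 "xd t"] in \<open>simp add: algebra_simps\<close>)
  moreover have "4 *\<^sub>R xd t + t *\<^sub>R ((3 / 2) *\<^sub>R u2 t + (t / 4) *\<^sub>R u3 t)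
      + (\<beta> * t / 2) *\<^sub>R grad (x t) + (\<beta> * t\<^sup>2 / 4) *\<^sub>R hess (x t) (xd t)
      = (\<beta> * t / 2 - t\<^sup>2 / 4) *\<^sub>R grad (x t)"
    using ode_scaled scaleR_add_left[of t "t * 3 / 2" "u2 t"]
    by (simp add: xd_def algebra_simps power2_eq_square)
  ultimately show ?thesis by simp
qed

lemma energy_has_real_derivative:
  assumes "t > t0"
  shows "(energy has_real_derivative energy_deriv t) (at t)"
proof -
  let ?v' = "(\<beta> * t / 2 - t\<^sup>2 / 4) *\<^sub>R grad (x t)"
  have "(v has_derivative (\<lambda>h. h *\<^sub>R ?v')) (at t)"
    using v_has_vector_derivative[OF assms] unfolding has_vector_derivative_def .
  from has_derivative_inner[OF this this]
  have "((\<lambda>s. v s \<bullet> v s) has_derivative (\<lambda>h. v t \<bullet> (h *\<^sub>R ?v') + (h *\<^sub>R ?v') \<bullet> v t)) (at t)" .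
  then have "((\<lambda>s. v s \<bullet> v s) has_real_derivative 2 * (v t \<bullet> ?v')) (at t)"
    unfolding has_field_derivative_def
    by (rule has_derivative_eq_rhs) (auto simp: fun_eq_iff inner_commute algebra_simps)
  from DERIV_cdivide[OF this, of 2]
  have norm_part: "((\<lambda>s. v s \<bullet> v s / 2) has_real_derivative
      (\<beta> * t / 2 - t\<^sup>2 / 4) * (v t \<bullet> grad (x t))) (at t)"
    by simp
  have coeff: "(energy_coeff has_real_derivative 3 * t\<^sup>2 / 4 - \<beta> * t) (at t)"
    unfolding energy_coeff_def[abs_def]
    by (auto intro!: derivative_eq_intros simp: power2_eq_square)
  have "((\<lambda>s. energy_coeff s * (f (x s) - f z) + v s \<bullet> v s / 2) has_real_derivative energy_deriv t) (at t)"
    using DERIV_add[OF DERIV_mult[OF coeff DERIV_diff[OF f_x_has_real_derivative[OF assms]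
          DERIV_const[of "f z"]]] norm_part]
    by (simp add: energy_deriv_def mult.commute)
  moreover have "energy = (\<lambda>s. energy_coeff s * (f (x s) - f z) + v s \<bullet> v s / 2)"
    by (simp add: fun_eq_iff energy_def)
  ultimately show ?thesis by simp
qed

lemma energy_coeff_ge:
  assumes "t \<ge> 4 * \<beta>"
  shows "t ^ 3 / 8 \<le> energy_coeff t"
proof -
  have "energy_coeff t - t ^ 3 / 8 = t\<^sup>2 * (t / 8 - \<beta> / 2)"
    unfolding energy_coeff_def by (simp add: algebra_simps power2_eq_square power3_eq_cube)
  also have "\<dots> \<ge> 0" using assms by simp
  finally show ?thesis by simp
qed

lemma coeff_gap_le_energy: "energy_coeff t * (f (x t) - f z) \<le> energy t"
  unfolding energy_def by simp

lemma energy_nonneg: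
  assumes "t \<ge> 4 * \<beta>"
  shows "0 \<le> energy t"
proof -
  have "0 \<le> t ^ 3 / 8" using assms beta_nonneg by simp
  also have "\<dots> \<le> energy_coeff t" using energy_coeff_ge[OF assms] .
  finally have "0 \<le> energy_coeff t * (f (x t) - f z)"
    using minimizer[of "x t"] by simp
  with coeff_gap_le_energy[of t] show ?thesis by linarith
qed

lemma energy_deriv_le:
  assumes "t > t0" and "t \<ge> 4 * \<beta>"
  shows "energy_deriv t \<le> 4 * \<beta> / t\<^sup>2 * energy t"
proof -
  have "t > 0" using assms t0_pos by simp
  define P where "P = f (x t) - f z"
  define Q where "Q = (x t - z) \<bullet> grad (x t)"
  define N where "N = grad (x t) \<bullet> grad (x t)"
  define k where "k = t\<^sup>2 / 4 - \<beta> * t / 2"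
  have "P \<ge> 0" using minimizer[of "x t"] unfolding P_def by simp
  have "P \<le> Q"
    using convex_on_gradient_inequality[OF convex grad, of "x t" z]
    unfolding P_def Q_def by (simp add: inner_commute inner_diff_right)
  have "k = t * (t / 4 - \<beta> / 2)" unfolding k_def by (simp add: algebra_simps power2_eq_square)
  then have "k \<ge> 0" using assms beta_nonneg \<open>t > 0\<close> by simp
  have v_grad: "v t \<bullet> grad (x t) = 3 * Q + t * (xd t \<bullet> grad (x t)) + \<beta> * t\<^sup>2 / 4 * N"
    unfolding v_def Q_def N_def by (simp add: inner_add_left)
  have coeff: "energy_coeff t = t * k" and neg_k: "\<beta> * t / 2 - t\<^sup>2 / 4 = - k"
    unfolding energy_coeff_def k_def by (simp_all add: algebra_simps power2_eq_square power3_eq_cube)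
  have "energy_deriv t = (3 * t\<^sup>2 / 4 - \<beta> * t) * P - 3 * k * Q - k * (\<beta> * t\<^sup>2 / 4) * N"
    unfolding energy_deriv_def v_grad coeff neg_k P_def by (simp add: inner_commute algebra_simps)
  also have "\<dots> \<le> (3 * t\<^sup>2 / 4 - \<beta> * t) * P - 3 * k * P"
  proof -
    have "0 \<le> k * (\<beta> * t\<^sup>2 / 4) * N"
      unfolding N_def using \<open>k \<ge> 0\<close> beta_nonneg by simp
    then show ?thesis using mult_left_mono[OF \<open>P \<le> Q\<close> \<open>k \<ge> 0\<close>] by linarith
  qed
  also have "\<dots> = \<beta> * (t / 2) * P"
    unfolding k_def by (simp add: algebra_simps)
  also have "\<dots> \<le> \<beta> * (t - 2 * \<beta>) * P"
    using assms beta_nonneg \<open>P \<ge> 0\<close> by (intro mult_right_mono mult_left_mono) auto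
  also have "\<dots> = 4 * \<beta> / t\<^sup>2 * (energy_coeff t * P)"
    using \<open>t > 0\<close> unfolding energy_coeff_def
    by (simp add: field_simps power2_eq_square power3_eq_cube)
  also have "\<dots> \<le> 4 * \<beta> / t\<^sup>2 * energy t"
    using coeff_gap_le_energy[of t] beta_nonneg unfolding P_def
    by (intro mult_left_mono) auto
  finally show ?thesis .
qed

lemma gap_eventually_le:
  "\<exists>C>0. \<forall>\<^sub>F t in at_top. f (x t) - f z \<le> C / t ^ 3"
proof -
  define T where "T = max (t0 + 1) (4 * \<beta>)"
  have T: "T > t0" "T \<ge> 4 * \<beta>" "T > 0" using t0_pos unfolding T_def by auto
  define M where "M = exp (4 * \<beta> / T) * energy T"
  have bound: "f (x t) - f z \<le> (8 * M + 1) / t ^ 3" if "t \<ge> T" for t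
  proof -
    have "t > 0" using T that by simp
    have "t ^ 3 / 8 * (f (x t) - f z) \<le> energy_coeff t * (f (x t) - f z)"
      using energy_coeff_ge[of t] minimizer[of "x t"] T that by (intro mult_right_mono) auto
    also have "\<dots> \<le> energy t" by (rule coeff_gap_le_energy)
    also have "\<dots> \<le> exp (4 * \<beta> / t) * energy t"
    proof -
      have "1 \<le> exp (4 * \<beta> / t)" using \<open>t > 0\<close> beta_nonneg by simp
      moreover have "0 \<le> energy t" using energy_nonneg T that by simp
      ultimately show ?thesis using mult_right_mono[of 1 "exp (4 * \<beta> / t)" "energy t"] by simp
    qed
    also have "\<dots> \<le> M"
      unfolding M_def using T that
      by (intro exp_inverse_mult_nonincreasing[where E' = energy_deriv]
          energy_has_real_derivative energy_deriv_le) auto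
    finally show ?thesis using \<open>t > 0\<close> by (simp add: field_simps)
  qed
  have "M \<ge> 0" using energy_nonneg[OF \<open>T \<ge> 4 * \<beta>\<close>] unfolding M_def by simp
  moreover have "\<forall>\<^sub>F t in at_top. f (x t) - f z \<le> (8 * M + 1) / t ^ 3"
    using eventually_ge_at_top[of T] by eventually_elim (rule bound)
  ultimately show ?thesis
    by (intro exI[of _ "8 * M + 1"]) auto
qed

end

theorem mainTheorem3:
  fixes f :: "'a::{real_inner, complete_space} \<Rightarrow> real"
    and grad :: "'a \<Rightarrow> 'a"
    and hess :: "'a \<Rightarrow> 'a \<Rightarrow>\<^sub>L 'a"
    and u u1 u2 u3 :: "real \<Rightarrow> 'a"
    and t0 \<beta> :: real
  assumes conv: "convex_on UNIV f"
    and grad: "\<And>x. (f has_derivative (\<lambda>h. grad x \<bullet> h)) (at x)"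
    and hess: "\<And>x. (grad has_derivative blinfun_apply (hess x)) (at x)"
    and hess_cont: "continuous_on UNIV hess"
    and argmin: "\<exists>z. \<forall>x. f z \<le> f x"
    and t0: "t0 > 0"
    and beta: "\<beta> \<ge> 0"
    and d1: "\<And>t. t \<ge> t0 \<Longrightarrow> (u has_vector_derivative u1 t) (at t within {t0..})"
    and d2: "\<And>t. t \<ge> t0 \<Longrightarrow> (u1 has_vector_derivative u2 t) (at t within {t0..})"
    and d3: "\<And>t. t \<ge> t0 \<Longrightarrow> (u2 has_vector_derivative u3 t) (at t within {t0..})"
    and ode: "\<And>t. t \<ge> t0 \<Longrightarrow>
      u3 t + (10 / t) *\<^sub>R u2 t + (20 / t\<^sup>2) *\<^sub>R u1 t
      + \<beta> *\<^sub>R blinfun_apply (hess (u t + (t / 4) *\<^sub>R u1 t)) ((5 / 4) *\<^sub>R u1 t + (t / 4) *\<^sub>R u2 t)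
      + grad (u t + (t / 4) *\<^sub>R u1 t) = 0"
  shows "\<exists>C>0. \<forall>\<^sub>F t in at_top. f (u t + (t / 4) *\<^sub>R u1 t) - (INF x. f x) \<le> C / t ^ 3"
proof -
  obtain z where z: "\<And>y. f z \<le> f y" using argmin by blast
  interpret sys: third_order_inertial_system f grad hess u u1 u2 u3 t0 \<beta> z
    using conv grad hess z t0 beta d1 d2 d3 ode by unfold_locales
  have "(INF y. f y) = f z"
    by (rule cInf_eq_minimum) (auto intro: z)
  then show ?thesis
    using sys.gap_eventually_le unfolding sys.x_def by simp
qed

end
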